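(* The general reduction algorithm, started from any nonzero integer quadruple, halts after finitely many steps. Let the reduced quadruple at termination be ordered as $\mathbf a=(a,b,c,d)$ with $a\le b\le c\le d$, and suppose $L(\mathbf a)=a+b+c+d\ge 0$. Then exactly one of the following holds: (i) $a+b+c\ge d>0$; (ii) $a+b+c\le 0<d$. Furthermore, if $\mathbf a=(a,b,c,d)$ (with $a\le b\le c\le d$) is a reduced quadruple with $L(\mathbf a)<0$, then $\mathbf a^*=(-d,-c,-b,-a)$ is a reduced quadruple with $L(\mathbf a^* )>0$.
   Context: Let $\mathbf S_1,\dots,\mathbf S_4$ be the $4\times4$ integer matrices acting on column vectors $(a_1,a_2,a_3,a_4)^T$ by replacing the $i$-th coordinate $a_i$ by $2\sum_{j\ne i}a_j-a_i$ and leaving the other coordinates fixed (e.g. $\mathbf S_4(a,b,c,d)^T=(a,b,c,2(a+b+c)-d)^T$). For $\mathbf v=(a,b,c,d)$ put $|\mathbf v|=|a|+|b|+|c|+|d|$ and $L(\mathbf v)=a+b+c+d$. General reduction algorithm: given an integer quadruple, (1) order it so that $a\le b\le c\le d$; then test in order $i=1,2,3,4$ whether $|\mathbf S_i\mathbf v|<|\mathbf v|$; for the first such $i$, replace $\mathbf v$ by $\mathbf S_i\mathbf v$ and repeat; (2) if no $\mathbf S_i$ strictly decreases $|\mathbf v|$, halt. A quadruple $\mathbf v$ for which no $\mathbf S_i$ strictly decreases $|\mathbf v|$ is called reduced. A reduced quadruple with $L\ge0$ satisfying (i) is called a root quadruple, one satisfying (ii) an exceptional quadruple; a reduced $\mathbf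 a$ with $L(\mathbf a)<0$ is called root (resp. exceptional) iff $\mathbf a^*$ is. *)

theory Defs
  imports Main
begin

text \<open>Integer quadruples are represented as lists of length 4; coordinate
  indices are 0-based, so \<open>Sop 0\<close>, ..., \<open>Sop 3\<close> are the paper's S_1, ..., S_4.\<close>

definition Sop :: "nat \<Rightarrow> int list \<Rightarrow> int list" where
  "Sop i v = v[i := 2 * (sum_list v - v ! i) - v ! i]"

definition qnorm :: "int list \<Rightarrow> int" where
  "qnorm v = sum_list (map abs v)"

definition L :: "int list \<Rightarrow> int" where
  "L v = sum_list v"

definition reduced :: "int list \<Rightarrow> bool" where
  "reduced v \<longleftrightarrow> (\<forall>i<4. \<not> qnorm (Sop i v) < qnorm v)"

definition star :: "int list \<Rightarrow> int list" where
  "star v = rev (map uminus v)"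

definition alg_step :: "int list \<Rightarrow> int list option" where
  "alg_step v = (let w = sort v in
     case find (\<lambda>i. qnorm (Sop i w) < qnorm w) [0..<4] of
       None \<Rightarrow> None
     | Some i \<Rightarrow> Some (Sop i w))"

inductive alg_result :: "int list \<Rightarrow> int list \<Rightarrow> bool" where
  halt: "alg_step v = None \<Longrightarrow> alg_result v (sort v)"
| step: "alg_step v = Some w \<Longrightarrow> alg_result w a \<Longrightarrow> alg_result v a"

end

(*
  Each S_i is an involution, and the algorithm applies one only when it
  strictly lowers the nonnegative integer norm |v|, so it halts; an involution
  fixing 0 never reaches 0 from a nonzero quadruple. Negating and reversing a
  quadruple preserves the norm and conjugates S_i into S_(5-i), which turns
  reduced quadruples into reduced ones and flips the sign of L.
*)
theory Submission
  imports Defs "HOL-Library.Multiset"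
begin

lemma sum_list_list_update:
  fixes xs :: "'a::ab_group_add list"
  assumes "k < length xs"
  shows "sum_list (xs[k := x]) = sum_list xs + x - xs ! k"
  using assms by (induction xs arbitrary: k) (auto split: nat.split)

lemma length_Sop [simp]: "length (Sop i v) = length v"
  by (simp add: Sop_def)

lemma Sop_Sop: "Sop i (Sop i v) = v"
proof (cases "i < length v")
  case True
  then show ?thesis by (simp add: Sop_def sum_list_list_update)
next
  case False
  then show ?thesis by (simp add: Sop_def list_update_beyond)
qed

lemma qnorm_eq_0_iff: "qnorm v = 0 \<longleftrightarrow> set v \<subseteq> {0}"
  unfolding qnorm_def by (subst sum_list_nonneg_eq_0_iff) auto

lemma qnorm_nonneg: "0 \<le> qnorm v"
  unfolding qnorm_def by (rule sum_list_nonneg) auto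

lemma qnorm_mset_eq: "mset v = mset w \<Longrightarrow> qnorm v = qnorm w"
  by (metis qnorm_def mset_map sum_mset_sum_list)

lemma qnorm_sort [simp]: "qnorm (sort v) = qnorm v"
  by (rule qnorm_mset_eq) simp

lemma Sop_zero:
  assumes "set v \<subseteq> {0}"
  shows "Sop i v = v"
proof (cases "i < length v")
  case True
  have "sum_list v = 0"
    using assms by (subst sum_list_nonneg_eq_0_iff) auto
  moreover have "v ! i = 0"
    using assms True nth_mem by blast
  ultimately show ?thesis by (simp add: Sop_def) (metis list_update_id)
next
  case False
  then show ?thesis by (simp add: Sop_def list_update_beyond)
qed

lemma qnorm_Sop_pos: "0 < qnorm v \<Longrightarrow> 0 < qnorm (Sop i v)"
  by (metis Sop_Sop Sop_zero qnorm_eq_0_iff qnorm_nonneg order_less_le)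

lemma alg_step_SomeD:
  "alg_step v = Some w \<Longrightarrow>
     \<exists>i<4. qnorm (Sop i (sort v)) < qnorm v \<and> w = Sop i (sort v)"
proof -
  assume "alg_step v = Some w"
  then obtain i where "find (\<lambda>i. qnorm (Sop i (sort v)) < qnorm v) [0..<4] = Some i"
    and "w = Sop i (sort v)"
    by (auto simp: alg_step_def Let_def split: option.splits)
  then show ?thesis by (auto simp: find_Some_iff)
qed

lemma alg_step_None_iff: "alg_step v = None \<longleftrightarrow> reduced (sort v)"
  by (auto simp: alg_step_def Let_def find_None_iff find_Some_iff reduced_def split: option.split)

lemma alg_step_qnorm_less: "alg_step v = Some w \<Longrightarrow> qnorm w < qnorm v"
  by (auto dest: alg_step_SomeD)

lemma alg_result_exists: "\<exists>a. alg_result v a"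
proof (induction "nat (qnorm v)" arbitrary: v rule: less_induct)
  case less
  show ?case
  proof (cases "alg_step v")
    case None
    then show ?thesis using alg_result.halt by blast
  next
    case (Some w)
    then have "nat (qnorm w) < nat (qnorm v)"
      using alg_step_qnorm_less[OF Some] qnorm_nonneg[of w] by simp
    then obtain a where "alg_result w a" using less.hyps by blast
    then show ?thesis using alg_result.step[OF Some] by blast
  qed
qed

lemma alg_result_sorted_reduced: "alg_result v a \<Longrightarrow> sorted a \<and> reduced a"
  by (induction rule: alg_result.induct) (simp_all add: alg_step_None_iff)

lemma alg_result_length: "alg_result v a \<Longrightarrow> length a = length v"
  by (induction rule: alg_result.induct) (auto dest: alg_step_SomeD)

lemma alg_result_qnorm_pos: "alg_result v a \<Longrightarrow> 0 < qnorm v \<Longrightarrow> 0 < qnorm a"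
  by (induction rule: alg_result.induct) (auto dest!: alg_step_SomeD simp: qnorm_Sop_pos)

text \<open>Reducedness is only needed for \<open>S\<^sub>4\<close>: \<open>|2x - d| \<ge> |d| = d\<close> with
  \<open>x = a + b + c\<close> forces \<open>x \<ge> d\<close> or \<open>x \<le> 0\<close>.\<close>

lemma reduced_root_or_exceptional:
  assumes "sorted [a, b, c, d]" and "reduced [a, b, c, d]"
    and "0 < qnorm [a, b, c, d]" and "0 \<le> L [a, b, c, d]"
  shows "0 < d \<and> (d \<le> a + b + c \<or> a + b + c \<le> 0)"
proof
  show "0 < d"
    using assms(1,3,4) by (auto simp: qnorm_def L_def)
  have "\<not> qnorm (Sop 3 [a, b, c, d]) < qnorm [a, b, c, d]"
    using assms(2) by (simp add: reduced_def)
  then have "\<bar>d\<bar> \<le> \<bar>2 * (a + b + c) - d\<bar>"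
    by (simp add: qnorm_def Sop_def)
  with \<open>0 < d\<close> show "d \<le> a + b + c \<or> a + b + c \<le> 0"
    by (auto simp: abs_if split: if_splits)
qed

lemma sum_list_map_uminus:
  fixes xs :: "'a::ab_group_add list"
  shows "sum_list (map uminus xs) = - sum_list xs"
  by (induction xs) simp_all

lemma L_star: "L (star v) = - L v"
  by (simp add: L_def star_def sum_list_map_uminus)

lemma qnorm_star: "qnorm (star v) = qnorm v"
  by (simp add: qnorm_def star_def rev_map[symmetric] comp_def)

lemma Sop_star:
  assumes "i < length v"
  shows "Sop i (star v) = star (Sop (length v - 1 - i) v)"
  using assms
  by (simp add: Sop_def star_def rev_update map_update rev_nth sum_list_map_uminus
      algebra_simps)

lemma reduced_star:
  assumes "length v = 4" and "reduced v"
  shows "reduced (star v)"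
  unfolding reduced_def
proof (intro allI impI)
  fix i :: nat
  assume "i < 4"
  then have "\<not> qnorm (Sop (3 - i) v) < qnorm v"
    using assms(2) by (simp add: reduced_def)
  then show "\<not> qnorm (Sop i (star v)) < qnorm (star v)"
    using \<open>i < 4\<close> assms(1) by (simp add: Sop_star qnorm_star)
qed

theorem theorem3p1:
  shows "(\<forall>v :: int list. length v = 4 \<and> v \<noteq> [0, 0, 0, 0] \<longrightarrow>
            (\<exists>a. alg_result v a) \<and>
            (\<forall>a. alg_result v a \<longrightarrow>
               length a = 4 \<and> sorted a \<and> reduced a \<and>
               (L a \<ge> 0 \<longrightarrow>
                  (let x = a ! 0 + a ! 1 + a ! 2; d = a ! 3 in
                   (x \<ge> d \<and> d > 0 \<and> \<not> (x \<le> 0 \<and> 0 < d)) \<or>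
                   (x \<le> 0 \<and> 0 < d \<and> \<not> (x \<ge> d \<and> d > 0))))))
       \<and> (\<forall>a :: int list. length a = 4 \<and> sorted a \<and> reduced a \<and> L a < 0 \<longrightarrow>
            reduced (star a) \<and> L (star a) > 0)"
proof (intro conjI allI impI)
  fix v :: "int list"
  assume v: "length v = 4 \<and> v \<noteq> [0, 0, 0, 0]"
  then have "0 < qnorm v"
    by (auto simp: qnorm_eq_0_iff length_Suc_conv numeral_eq_Suc order_less_le qnorm_nonneg)
  show "\<exists>a. alg_result v a"
    by (rule alg_result_exists)
  fix a
  assume result: "alg_result v a"
  then show "length a = 4" "sorted a" "reduced a"
    using v alg_result_length alg_result_sorted_reduced by auto
  then obtain p q r s where a: "a = [p, q, r, s]"
    by (auto simp: length_Suc_conv numeral_eq_Suc)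
  assume "L a \<ge> 0"
  moreover have "0 < qnorm a"
    using result \<open>0 < qnorm v\<close> by (rule alg_result_qnorm_pos)
  ultimately show "let x = a ! 0 + a ! 1 + a ! 2; d = a ! 3 in
                   (x \<ge> d \<and> d > 0 \<and> \<not> (x \<le> 0 \<and> 0 < d)) \<or>
                   (x \<le> 0 \<and> 0 < d \<and> \<not> (x \<ge> d \<and> d > 0))"
    using reduced_root_or_exceptional[of p q r s] \<open>sorted a\<close> \<open>reduced a\<close>
    by (auto simp: a Let_def)
next
  fix a :: "int list"
  assume "length a = 4 \<and> sorted a \<and> reduced a \<and> L a < 0"
  then show "reduced (star a)" and "L (star a) > 0"
    by (simp_all add: reduced_star L_star)
qed

end
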